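(* Let $L=\ell_1$, viewed as a subset of $\ell_2$ with the $\ell_2$-norm topology, let $u\in\ell_2\setminus\ell_1$, and let $C=\operatorname{co}(L\cup\{u\})$. Then $\operatorname{icr} C=C\setminus(L\cup\{u\})\neq\emptyset$, while $L\subseteq\operatorname{fri} C$; in particular $\emptyset\neq\operatorname{icr} C\neq\operatorname{fri} C$.
   Context: $\operatorname{co}$ denotes the convex hull (set of finite convex combinations). For a convex set $C$, a convex subset $F\subseteq C$ is a face of $C$ if for every $x\in F$ and all $y,z\in C$ with $x\in(y,z)=\{(1-t)y+tz:t\in(0,1)\}$ we have $y,z\in F$; $F_{\min}(x,C)$ is the intersection of all faces of $C$ containing $x\in C$. $\operatorname{icr} C=\{x\in C:\forall y\in C\ \exists z\in C,\ x\in(y,z)\}$; $\operatorname{fri} C=\{x\in C: C\subseteq\overline{F_{\min}(x,C)}\}$. *)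

theory Defs
  imports "HOL-Analysis.Analysis"
begin

definition l1 :: "(nat \<Rightarrow> real) set" where
  "l1 = {x. summable (\<lambda>n. \<bar>x n\<bar>)}"

definition l2 :: "(nat \<Rightarrow> real) set" where
  "l2 = {x. summable (\<lambda>n. (x n)\<^sup>2)}"

definition l2norm :: "(nat \<Rightarrow> real) \<Rightarrow> real" where
  "l2norm x = sqrt (\<Sum>n. (x n)\<^sup>2)"

definition l2closure :: "(nat \<Rightarrow> real) set \<Rightarrow> (nat \<Rightarrow> real) set" where
  "l2closure S = {y \<in> l2. \<forall>e>0. \<exists>z\<in>S. l2norm (\<lambda>n. y n - z n) < e}"

definition oseg :: "(nat \<Rightarrow> real) \<Rightarrow> (nat \<Rightarrow> real) \<Rightarrow> (nat \<Rightarrow> real) set" where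
  "oseg y z = {(\<lambda>n. (1 - t) * y n + t * z n) | t. 0 < t \<and> t < 1}"

definition co :: "(nat \<Rightarrow> real) set \<Rightarrow> (nat \<Rightarrow> real) set" where
  "co S = {x. \<exists>(k::nat) (a::nat \<Rightarrow> real) (p::nat \<Rightarrow> nat \<Rightarrow> real).
              (\<forall>i<k. 0 \<le> a i \<and> p i \<in> S) \<and> (\<Sum>i<k. a i) = 1 \<and>
              x = (\<lambda>n. \<Sum>i<k. a i * p i n)}"

definition cvx :: "(nat \<Rightarrow> real) set \<Rightarrow> bool" where
  "cvx S \<longleftrightarrow> (\<forall>y\<in>S. \<forall>z\<in>S. \<forall>t::real. 0 \<le> t \<and> t \<le> 1 \<longrightarrow>
                 (\<lambda>n. (1 - t) * y n + t * z n) \<in> S)"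

definition is_face :: "(nat \<Rightarrow> real) set \<Rightarrow> (nat \<Rightarrow> real) set \<Rightarrow> bool" where
  "is_face F C \<longleftrightarrow> F \<subseteq> C \<and> cvx F \<and>
     (\<forall>x\<in>F. \<forall>y\<in>C. \<forall>z\<in>C. x \<in> oseg y z \<longrightarrow> y \<in> F \<and> z \<in> F)"

definition Fmin :: "(nat \<Rightarrow> real) \<Rightarrow> (nat \<Rightarrow> real) set \<Rightarrow> (nat \<Rightarrow> real) set" where
  "Fmin x C = \<Inter>{F. is_face F C \<and> x \<in> F}"

definition icr :: "(nat \<Rightarrow> real) set \<Rightarrow> (nat \<Rightarrow> real) set" where
  "icr C = {x \<in> C. \<forall>y\<in>C. \<exists>z\<in>C. x \<in> oseg y z}"

definition fri :: "(nat \<Rightarrow> real) set \<Rightarrow> (nat \<Rightarrow> real) set" where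
  "fri C = {x \<in> C. C \<subseteq> l2closure (Fmin x C)}"

end

theory Submission
  imports Defs
begin

text \<open>Every point of C has the form (1 - t) l + t u with l in L and t in [0,1], and since
  u \<notin> L the coefficient t is uniquely determined; it is therefore an affine function on C.
  A point with 0 < t < 1 can be extended a little beyond itself away from any point of C without
  leaving C, so it lies in icr C. The points of L (t = 0) and u (t = 1) cannot: a point strictly
  inside a segment whose endpoint has coefficient 1 (resp. 0) has coefficient strictly between.
  For fri, L is a linear subspace, so any face of C meeting L contains all of L, and L is dense
  in l2 and hence in C.\<close>

lemma l1_zero: "(\<lambda>n. 0) \<in> l1"
  by (simp add: l1_def)

lemma l1_lincomb:
  assumes "x \<in> l1" "y \<in> l1"
  shows "(\<lambda>n. a * x n + b * y n) \<in> l1"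
proof -
  have "summable (\<lambda>n. \<bar>a\<bar> * \<bar>x n\<bar> + \<bar>b\<bar> * \<bar>y n\<bar>)"
    using assms by (intro summable_add summable_mult) (auto simp: l1_def)
  then have "summable (\<lambda>n. \<bar>a * x n + b * y n\<bar>)"
    by (rule summable_comparison_test') (auto simp: abs_mult intro: order.trans[OF abs_triangle_ineq])
  then show ?thesis
    by (simp add: l1_def)
qed

lemma l1_sum:
  assumes "\<And>i. i \<in> I \<Longrightarrow> p i \<in> l1"
  shows "(\<lambda>n. \<Sum>i\<in>I. a i * p i n) \<in> l1"
proof -
  have "summable (\<lambda>n. \<Sum>i\<in>I. \<bar>a i\<bar> * \<bar>p i n\<bar>)"
    using assms by (intro summable_sum summable_mult) (auto simp: l1_def)
  then have "summable (\<lambda>n. \<bar>\<Sum>i\<in>I. a i * p i n\<bar>)"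
    by (rule summable_comparison_test') (auto simp: abs_mult intro: order.trans[OF sum_abs])
  then show ?thesis
    by (simp add: l1_def)
qed

lemma l1_subset_l2: "l1 \<subseteq> l2"
proof
  fix x assume "x \<in> l1"
  then have sx: "summable (\<lambda>n. \<bar>x n\<bar>)"
    by (simp add: l1_def)
  define S where "S = (\<Sum>n. \<bar>x n\<bar>)"
  have "\<bar>x n\<bar> \<le> S" for n
    using sum_le_suminf[OF sx, of "{n}"] by (simp add: S_def)
  then have bound: "norm ((x n)\<^sup>2) \<le> S * \<bar>x n\<bar>" for n
    using mult_right_mono[of "\<bar>x n\<bar>" S "\<bar>x n\<bar>"] by (simp add: power2_eq_square)
  have "summable (\<lambda>n. (x n)\<^sup>2)"
    using bound by (intro summable_comparison_test'[OF summable_mult[OF sx, of S]])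
  then show "x \<in> l2"
    by (simp add: l2_def)
qed

lemma l2_lincomb:
  assumes "x \<in> l2" "y \<in> l2"
  shows "(\<lambda>n. a * x n + b * y n) \<in> l2"
proof -
  have bound: "norm ((a * x n + b * y n)\<^sup>2) \<le> 2 * a\<^sup>2 * (x n)\<^sup>2 + 2 * b\<^sup>2 * (y n)\<^sup>2" for n
  proof -
    have "(a * x n + b * y n)\<^sup>2 \<le> 2 * a\<^sup>2 * (x n)\<^sup>2 + 2 * b\<^sup>2 * (y n)\<^sup>2"
      using zero_le_power2[of "a * x n - b * y n"] by (simp add: power2_eq_square algebra_simps)
    then show ?thesis
      by simp
  qed
  have "summable (\<lambda>n. 2 * a\<^sup>2 * (x n)\<^sup>2 + 2 * b\<^sup>2 * (y n)\<^sup>2)"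
    using assms by (intro summable_add summable_mult) (auto simp: l2_def)
  then have "summable (\<lambda>n. (a * x n + b * y n)\<^sup>2)"
    using bound by (rule summable_comparison_test')
  then show ?thesis
    by (simp add: l2_def)
qed

text \<open>Truncations of y lie in l1 and converge to y in l2.\<close>
lemma l2_subset_l2closure_l1: "l2 \<subseteq> l2closure l1"
proof
  fix y assume "y \<in> l2"
  then have sy: "summable (\<lambda>n. (y n)\<^sup>2)"
    by (simp add: l2_def)
  have "\<exists>z\<in>l1. l2norm (\<lambda>n. y n - z n) < e" if "e > 0" for e
  proof -
    from LIMSEQ_D[OF summable_LIMSEQ[OF sy], of "e\<^sup>2"] \<open>e > 0\<close>
    obtain N where "\<forall>n\<ge>N. dist (\<Sum>i<n. (y i)\<^sup>2) (\<Sum>n. (y n)\<^sup>2) < e\<^sup>2"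
      by (auto simp: dist_real_def)
    then have N: "(\<Sum>n. (y n)\<^sup>2) - (\<Sum>n<N. (y n)\<^sup>2) < e\<^sup>2"
      by (auto simp: dist_real_def)
    define z where "z = (\<lambda>n. if n < N then y n else 0)"
    define g where "g = (\<lambda>n. if n < N then (y n)\<^sup>2 else 0)"
    have "z \<in> l1"
      unfolding l1_def z_def mem_Collect_eq by (rule summable_finite[of "{..<N}"]) auto
    have sg: "summable g"
      unfolding g_def by (rule summable_finite[of "{..<N}"]) auto
    moreover have "suminf g = (\<Sum>n<N. (y n)\<^sup>2)"
      by (subst suminf_finite[of "{..<N}"]) (auto simp: g_def)
    moreover have "(\<lambda>n. (y n - z n)\<^sup>2) = (\<lambda>n. (y n)\<^sup>2 - g n)"
      by (auto simp: z_def g_def)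
    ultimately have "(\<Sum>n. (y n - z n)\<^sup>2) < e\<^sup>2"
      using suminf_diff[OF sy sg, symmetric] N by simp
    then have "l2norm (\<lambda>n. y n - z n) < e"
      using \<open>e > 0\<close> unfolding l2norm_def by (metis real_sqrt_abs real_sqrt_less_mono abs_of_pos)
    with \<open>z \<in> l1\<close> show ?thesis
      by blast
  qed
  with \<open>y \<in> l2\<close> show "y \<in> l2closure l1"
    by (simp add: l2closure_def)
qed

lemma l2closure_mono: "A \<subseteq> B \<Longrightarrow> l2closure A \<subseteq> l2closure B"
  unfolding l2closure_def by blast

lemma osegI:
  assumes "0 < \<theta>" "\<theta> < 1" "\<And>n. x n = (1 - \<theta>) * y n + \<theta> * z n"
  shows "x \<in> oseg y z"
  unfolding oseg_def using assms by (auto simp: fun_eq_iff)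

lemma osegE:
  assumes "x \<in> oseg y z"
  obtains \<theta> where "0 < \<theta>" "\<theta> < 1" "\<And>n. x n = (1 - \<theta>) * y n + \<theta> * z n"
  using assms unfolding oseg_def by auto

lemma l1_coeff_unique:
  assumes "u \<notin> l1" "l \<in> l1" "m \<in> l1" "\<And>n. l n + a * u n = m n + b * u n"
  shows "a = b"
proof (rule ccontr)
  assume "a \<noteq> b"
  have "(\<lambda>n. (1 / (a - b)) * m n + (- 1 / (a - b)) * l n) \<in> l1"
    using assms(3,2) by (rule l1_lincomb)
  moreover have "(a - b) * u n = m n - l n" for n
    using assms(4)[of n] by (simp add: algebra_simps)
  then have "u n = (m n - l n) / (a - b)" for n
    using \<open>a \<noteq> b\<close> by (simp add: eq_divide_eq mult.commute)
  then have "(\<lambda>n. (1 / (a - b)) * m n + (- 1 / (a - b)) * l n) = u"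
    by (simp add: fun_eq_iff diff_divide_distrib)
  ultimately show False
    using assms(1) by simp
qed

definition l1_join :: "(nat \<Rightarrow> real) \<Rightarrow> (nat \<Rightarrow> real) set" where
  "l1_join u = {\<lambda>n. (1 - t) * l n + t * u n | t l. 0 \<le> t \<and> t \<le> 1 \<and> l \<in> l1}"

lemma l1_joinI:
  assumes "0 \<le> t" "t \<le> 1" "l \<in> l1" "\<And>n. x n = (1 - t) * l n + t * u n"
  shows "x \<in> l1_join u"
  unfolding l1_join_def using assms by (auto simp: fun_eq_iff)

lemma l1_joinE:
  assumes "x \<in> l1_join u"
  obtains t l where "0 \<le> t" "t \<le> 1" "l \<in> l1" "\<And>n. x n = (1 - t) * l n + t * u n"
  using assms unfolding l1_join_def by auto

lemma l1_join_shiftI: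
  assumes "w \<in> l1" "0 \<le> r" "r < 1" "\<And>n. x n = w n + r * u n"
  shows "x \<in> l1_join u"
proof (rule l1_joinI)
  show "(\<lambda>n. (1 / (1 - r)) * w n + 0 * w n) \<in> l1"
    using assms(1,1) by (rule l1_lincomb)
qed (use assms in auto)

lemma l1_subset_l1_join: "l1 \<subseteq> l1_join u"
  by (auto intro: l1_joinI[of 0])

lemma self_in_l1_join: "u \<in> l1_join u"
  by (rule l1_joinI[of 1 "\<lambda>n. 0"]) (auto simp: l1_zero)

lemma l1_join_subset_l2:
  assumes "u \<in> l2"
  shows "l1_join u \<subseteq> l2"
proof
  fix x assume "x \<in> l1_join u"
  then obtain t l where "l \<in> l1" and x: "\<And>n. x n = (1 - t) * l n + t * u n"
    by (metis l1_joinE)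
  then have "x = (\<lambda>n. (1 - t) * l n + t * u n)"
    by (simp add: fun_eq_iff)
  with l2_lincomb[OF subsetD[OF l1_subset_l2 \<open>l \<in> l1\<close>] assms] show "x \<in> l2"
    by simp
qed

lemma l1_join_subset_co: "l1_join u \<subseteq> co (l1 \<union> {u})"
proof
  fix x assume "x \<in> l1_join u"
  then obtain t l where t: "0 \<le> t" "t \<le> 1" "l \<in> l1" and x: "\<And>n. x n = (1 - t) * l n + t * u n"
    by (metis l1_joinE)
  define a where "a i = (if i = 0 then 1 - t else t)" for i :: nat
  define p where "p i = (if i = 0 then l else u)" for i :: nat
  have combination: "(\<forall>i<2. 0 \<le> a i \<and> p i \<in> l1 \<union> {u}) \<and> (\<Sum>i<2. a i) = 1
      \<and> x = (\<lambda>n. \<Sum>i<2. a i * p i n)"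
    using t x by (auto simp: a_def p_def numeral_2_eq_2 lessThan_Suc fun_eq_iff)
  show "x \<in> co (l1 \<union> {u})"
    unfolding co_def by (intro CollectI exI[of _ "2::nat"] exI[of _ a] exI[of _ p]) (rule combination)
qed

lemma co_subset_l1_join: "co (l1 \<union> {u}) \<subseteq> l1_join u"
proof
  fix x assume "x \<in> co (l1 \<union> {u})"
  then obtain k :: nat and a :: "nat \<Rightarrow> real" and p where a: "\<forall>i<k. 0 \<le> a i \<and> p i \<in> l1 \<union> {u}" and a1: "(\<Sum>i<k. a i) = 1"
    and x: "x = (\<lambda>n. \<Sum>i<k. a i * p i n)"
    unfolding co_def mem_Collect_eq by iprover
  define \<tau> where "\<tau> i = (if p i = u then 1 else 0 :: real)" for i
  define q where "q i = (if p i = u then (\<lambda>n. 0) else p i)" for i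
  define t where "t = (\<Sum>i<k. a i * \<tau> i)"
  define w where "w n = (\<Sum>i<k. (a i * (1 - \<tau> i)) * q i n)" for n
  have "w \<in> l1"
    unfolding w_def[abs_def] using a l1_zero by (intro l1_sum) (auto simp: q_def)
  have x_eq: "x n = w n + t * u n" for n
    unfolding x w_def t_def sum_distrib_right sum.distrib[symmetric]
    by (intro sum.cong) (auto simp: \<tau>_def q_def algebra_simps)
  have rest: "1 - t = (\<Sum>i<k. a i * (1 - \<tau> i))"
    using a1 by (simp add: t_def right_diff_distrib sum_subtractf)
  have nonneg: "0 \<le> a i * (1 - \<tau> i)" "0 \<le> a i * \<tau> i" if "i < k" for i
    using a that by (auto simp: \<tau>_def)
  have "0 \<le> t"
    unfolding t_def by (rule sum_nonneg) (simp add: nonneg(2))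
  have "0 \<le> (\<Sum>i<k. a i * (1 - \<tau> i))"
    by (rule sum_nonneg) (simp add: nonneg(1))
  with rest have "t \<le> 1"
    by linarith
  show "x \<in> l1_join u"
  proof (cases "t = 1")
    case True
    then have "a i * (1 - \<tau> i) = 0" if "i < k" for i
      using rest nonneg(1) sum_nonneg_eq_0_iff[of "{..<k}" "\<lambda>i. a i * (1 - \<tau> i)"] that by auto
    then have "w n = 0" for n
      unfolding w_def by (intro sum.neutral) simp
    then have "x = u"
      using x_eq True by (simp add: fun_eq_iff)
    then show ?thesis
      using self_in_l1_join by simp
  next
    case False
    with \<open>w \<in> l1\<close> \<open>0 \<le> t\<close> \<open>t \<le> 1\<close> x_eq show ?thesis
      by (intro l1_join_shiftI) auto
  qed
qed

lemma co_l1_insert_eq: "co (l1 \<union> {u}) = l1_join u"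
  using co_subset_l1_join l1_join_subset_co by blast

lemma l1_join_oseg_coeff:
  assumes "u \<notin> l1" "x \<in> oseg y z" "l \<in> l1" "m \<in> l1" "k \<in> l1"
    and x: "\<And>n. x n = (1 - t) * l n + t * u n"
    and y: "\<And>n. y n = (1 - s) * m n + s * u n"
    and z: "\<And>n. z n = (1 - r) * k n + r * u n"
  obtains \<theta> where "0 < \<theta>" "\<theta> < 1" "t = (1 - \<theta>) * s + \<theta> * r"
proof -
  obtain \<theta> where \<theta>: "0 < \<theta>" "\<theta> < 1" and xyz: "\<And>n. x n = (1 - \<theta>) * y n + \<theta> * z n"
    using assms(2) by (metis osegE)
  have "(\<lambda>n. (1 - t) * l n + 0 * l n) \<in> l1"
    using assms(3,3) by (rule l1_lincomb)
  moreover have "(\<lambda>n. ((1 - \<theta>) * (1 - s)) * m n + (\<theta> * (1 - r)) * k n) \<in> l1"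
    using assms(4,5) by (rule l1_lincomb)
  moreover have "(1 - t) * l n + 0 * l n + t * u n
      = ((1 - \<theta>) * (1 - s)) * m n + (\<theta> * (1 - r)) * k n + ((1 - \<theta>) * s + \<theta> * r) * u n" for n
    using xyz[of n] x[of n] y[of n] z[of n] by (simp add: algebra_simps)
  ultimately have "t = (1 - \<theta>) * s + \<theta> * r"
    by (rule l1_coeff_unique[OF assms(1)])
  with \<theta> show thesis
    by (rule that)
qed

lemma icr_l1_join_subset:
  assumes "u \<notin> l1"
  shows "icr (l1_join u) \<subseteq> l1_join u - (l1 \<union> {u})"
proof
  fix x assume "x \<in> icr (l1_join u)"
  then have "x \<in> l1_join u" and ext: "\<And>y. y \<in> l1_join u \<Longrightarrow> \<exists>z\<in>l1_join u. x \<in> oseg y z"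
    by (auto simp: icr_def)
  have "x \<notin> l1"
  proof
    assume "x \<in> l1"
    obtain z where "z \<in> l1_join u" "x \<in> oseg u z"
      using ext[OF self_in_l1_join] by blast
    then obtain r k where "0 \<le> r" "k \<in> l1" and z: "\<And>n. z n = (1 - r) * k n + r * u n"
      by (metis l1_joinE)
    obtain \<theta> where "0 < \<theta>" "\<theta> < 1" "0 = (1 - \<theta>) * 1 + \<theta> * r"
      by (rule l1_join_oseg_coeff[OF assms \<open>x \<in> oseg u z\<close> \<open>x \<in> l1\<close> l1_zero \<open>k \<in> l1\<close>, of 0 1 r])
        (auto simp: z)
    moreover have "0 \<le> \<theta> * r"
      using \<open>0 < \<theta>\<close> \<open>0 \<le> r\<close> by simp
    ultimately show False
      using mult_1_right[of "1 - \<theta>"] by linarith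
  qed
  moreover have "x \<noteq> u"
  proof
    assume "x = u"
    obtain z where "z \<in> l1_join u" "x \<in> oseg (\<lambda>n. 0) z"
      using ext[OF subsetD[OF l1_subset_l1_join l1_zero]] by blast
    then obtain r k where "r \<le> 1" "k \<in> l1" and z: "\<And>n. z n = (1 - r) * k n + r * u n"
      by (metis l1_joinE)
    obtain \<theta> where "0 < \<theta>" "\<theta> < 1" "1 = (1 - \<theta>) * 0 + \<theta> * r"
      by (rule l1_join_oseg_coeff[OF assms \<open>x \<in> oseg (\<lambda>n. 0) z\<close> l1_zero l1_zero \<open>k \<in> l1\<close>, of 1 0 r])
        (auto simp: z \<open>x = u\<close>)
    moreover have "\<theta> * r \<le> \<theta>"
      using \<open>0 < \<theta>\<close> \<open>r \<le> 1\<close> by (simp add: mult_left_le)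
    ultimately show False
      by linarith
  qed
  ultimately show "x \<in> l1_join u - (l1 \<union> {u})"
    using \<open>x \<in> l1_join u\<close> by simp
qed

text \<open>The extension z = (1 + \<delta>) x - \<delta> y of the segment from y through x has coefficient
  (1 + \<delta>) t - \<delta> s, which stays in [0,1) for \<delta> = min t (1 - t).\<close>
lemma l1_join_diff_subset_icr: "l1_join u - (l1 \<union> {u}) \<subseteq> icr (l1_join u)"
proof
  fix x assume x: "x \<in> l1_join u - (l1 \<union> {u})"
  then obtain t l where "0 \<le> t" "t \<le> 1" "l \<in> l1" and xn: "\<And>n. x n = (1 - t) * l n + t * u n"
    by (metis DiffD1 l1_joinE)
  have "t \<noteq> 0"
  proof
    assume "t = 0"
    then have "x = l"
      using xn by (simp add: fun_eq_iff)
    with x \<open>l \<in> l1\<close> show False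
      by simp
  qed
  moreover have "t \<noteq> 1"
  proof
    assume "t = 1"
    then have "x = u"
      using xn by (simp add: fun_eq_iff)
    with x show False
      by simp
  qed
  ultimately have t: "0 < t" "t < 1"
    using \<open>0 \<le> t\<close> \<open>t \<le> 1\<close> by auto
  have "\<exists>z\<in>l1_join u. x \<in> oseg y z" if "y \<in> l1_join u" for y
  proof -
    obtain s m where "0 \<le> s" "s \<le> 1" "m \<in> l1" and yn: "\<And>n. y n = (1 - s) * m n + s * u n"
      using \<open>y \<in> l1_join u\<close> by (metis l1_joinE)
    define \<delta> where "\<delta> = min t (1 - t)"
    define r where "r = (1 + \<delta>) * t - \<delta> * s"
    define z where "z n = (1 + \<delta>) * x n - \<delta> * y n" for n
    have "0 < \<delta>" "\<delta> \<le> t" "\<delta> \<le> 1 - t"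
      using t by (auto simp: \<delta>_def)
    have "\<delta> * s \<le> \<delta>" "0 \<le> \<delta> * s" "0 \<le> \<delta> * t"
      using \<open>0 < \<delta>\<close> \<open>0 \<le> s\<close> \<open>s \<le> 1\<close> t by (simp_all add: mult_left_le)
    moreover have "\<delta> * t \<le> (1 - t) * t"
      using \<open>\<delta> \<le> 1 - t\<close> t by (simp add: mult_right_mono)
    moreover have "(1 - t) * t < 1 - t"
      using mult_strict_left_mono[of t 1 "1 - t"] t by simp
    moreover have "r = t + \<delta> * t - \<delta> * s"
      by (simp add: r_def algebra_simps)
    ultimately have r: "0 \<le> r" "r < 1"
      using \<open>\<delta> \<le> t\<close> by linarith+
    have "(\<lambda>n. ((1 + \<delta>) * (1 - t)) * l n + (- \<delta> * (1 - s)) * m n) \<in> l1"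
      using \<open>l \<in> l1\<close> \<open>m \<in> l1\<close> by (rule l1_lincomb)
    then have "z \<in> l1_join u"
      by (rule l1_join_shiftI[OF _ r]) (unfold z_def xn yn r_def, simp add: algebra_simps)
    define \<theta> where "\<theta> = 1 / (1 + \<delta>)"
    have "\<theta> * (1 + \<delta>) = 1" "0 < \<theta>" "\<theta> < 1"
      using \<open>0 < \<delta>\<close> by (auto simp: \<theta>_def)
    have "(1 - \<theta>) * y n + \<theta> * z n = (1 - \<theta> * (1 + \<delta>)) * y n + (\<theta> * (1 + \<delta>)) * x n" for n
      unfolding z_def by (simp add: algebra_simps)
    then have "x n = (1 - \<theta>) * y n + \<theta> * z n" for n
      using \<open>\<theta> * (1 + \<delta>) = 1\<close> by simp
    then have "x \<in> oseg y z"
      by (rule osegI[OF \<open>0 < \<theta>\<close> \<open>\<theta> < 1\<close>])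
    moreover note \<open>z \<in> l1_join u\<close>
    ultimately show ?thesis
      by blast
  qed
  with x show "x \<in> icr (l1_join u)"
    by (simp add: icr_def)
qed

text \<open>A face containing x in L contains every m in L, since x is the midpoint of m and 2x - m.\<close>
lemma l1_subset_Fmin:
  assumes "x \<in> l1"
  shows "l1 \<subseteq> Fmin x (l1_join u)"
proof
  fix m assume "m \<in> l1"
  have mirror: "(\<lambda>n. 2 * x n + (- 1) * m n) \<in> l1"
    using assms \<open>m \<in> l1\<close> by (rule l1_lincomb)
  have "x \<in> oseg m (\<lambda>n. 2 * x n + (- 1) * m n)"
    by (rule osegI[of "1 / 2"]) (auto simp: algebra_simps)
  with \<open>m \<in> l1\<close> mirror l1_subset_l1_join show "m \<in> Fmin x (l1_join u)"
    unfolding Fmin_def is_face_def by blast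
qed

lemma l1_subset_fri:
  assumes "u \<in> l2"
  shows "l1 \<subseteq> fri (l1_join u)"
proof
  fix x assume "x \<in> l1"
  have "l1_join u \<subseteq> l2closure l1"
    using l1_join_subset_l2[OF assms] l2_subset_l2closure_l1 by blast
  also have "\<dots> \<subseteq> l2closure (Fmin x (l1_join u))"
    using l1_subset_Fmin[OF \<open>x \<in> l1\<close>] by (rule l2closure_mono)
  finally show "x \<in> fri (l1_join u)"
    using \<open>x \<in> l1\<close> l1_subset_l1_join by (auto simp: fri_def)
qed

theorem mainTheorem20:
  fixes u :: "nat \<Rightarrow> real"
  assumes "u \<in> l2" and "u \<notin> l1"
  shows "icr (co (l1 \<union> {u})) = co (l1 \<union> {u}) - (l1 \<union> {u})
         \<and> icr (co (l1 \<union> {u})) \<noteq> {}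
         \<and> l1 \<subseteq> fri (co (l1 \<union> {u}))
         \<and> icr (co (l1 \<union> {u})) \<noteq> fri (co (l1 \<union> {u}))"
proof -
  have icr_eq: "icr (l1_join u) = l1_join u - (l1 \<union> {u})"
    using icr_l1_join_subset[OF assms(2)] l1_join_diff_subset_icr by blast
  define h where "h n = (1 / 2) * u n" for n
  have "h \<in> l1_join u"
    by (rule l1_joinI[of "1 / 2" "\<lambda>n. 0"]) (auto simp: h_def l1_zero)
  moreover have "h \<notin> l1"
    using assms(2) l1_lincomb[of h h 1 1] by (auto simp: h_def)
  moreover have "u \<noteq> (\<lambda>n. 0)"
    using assms(2) l1_zero by auto
  then have "h \<noteq> u"
    by (auto simp: h_def fun_eq_iff)
  ultimately have "h \<in> icr (l1_join u)"
    by (simp add: icr_eq)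
  moreover have "(\<lambda>n. 0) \<in> fri (l1_join u) - icr (l1_join u)"
    using l1_subset_fri[OF assms(1)] l1_zero by (auto simp: icr_eq)
  ultimately show ?thesis
    unfolding co_l1_insert_eq using icr_eq l1_subset_fri[OF assms(1)] by blast
qed

end
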